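(* Let $\mathcal F=(A_1,\dots,A_m)$ and $\mathcal F'=(A'_1,\dots,A'_m)$ be objects of $\mathcal{S}h_n(\Lambda_m,\mathbbm{k})$ described as below. Then $$\mathrm{Ext}^0(\mathcal F,\mathcal F')\cong\{(u_1,u_2)\in(\mathrm{End}\,V)^2: A'_ku_1=u_2A_k\text{ for all even }k,\ A'_ku_2=u_1A_k\text{ for all odd }k\},$$ where $(u_1,u_2)$ corresponds to the morphism given on the diagram data by $u_0=u_1$ on the top $V$, $u_k=u_1$ on the $k$-th lower arc for $k$ odd, $u_k=u_2$ for $k$ even, and $v=\begin{pmatrix}u_2&0\\0&u_1\end{pmatrix}$ on $V^2$.
   Context: $\mathbbm{k}$ a field, $\dim V=n$; $P_0=1$, $P_1(a_1)=a_1$, $P_m=P_{m-1}(a_1,\dots,a_{m-1})a_m+P_{m-2}(a_1,\dots,a_{m-2})$. $\Lambda_m$ is the rainbow closure of $\sigma_1^m\in B_2$ with binary Maslov potential; $\mathcal{S}h_n(\Lambda_m,\mathbbm{k})$ is the category of constructible (w.r.t. the front) complexes of sheaves of $\mathbbm{k}$-modules on $\mathbb R^2$ with microsupport in $\Lambda_m$, acyclic for $z\ll 0$, of microlocal rank $n$, modulo acyclics. A tuple $(A_1,\dots,A_m)\in(\mathrm{End}\,V)^m$ with $P_m(A_1,\dots,A_m)$ invertible denotes the sheaf with diagram data: top space $V$ (inside outer cusps), middle space $V^2$ (inside inner cusps), $\psi=(0\ \ 1):V^2\to V$, and maps $\phi_1,\dots,\phi_{m+1}:V\to V^2$ from the $m+1$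 lower braid arcs (each with stalk $V$) such that $\begin{pmatrix}0&1\\1&A_1\end{pmatrix}\cdots\begin{pmatrix}0&1\\1&A_k\end{pmatrix}=\phi_k\oplus\phi_{k+1}$ for $1\le k\le m$. A morphism of such sheaves is a family of maps $u_0$ (top $V$), $v$ (on $V^2$), $u_1,\dots,u_{m+1}$ (on the arcs) commuting with all $\psi$, $\phi_i$. *)

theory Defs
  imports "HOL-Analysis.Analysis"
begin

text \<open>V is the vector space 'a^'n over the field 'a (n = CARD('n)); End V is 'a^'n^'n,
  composition is matrix product. Linear maps V -> V^2 are pairs (top, bottom) of
  endomorphisms; linear maps V^2 -> V^2 are 2x2 block matrices (a,b,c,d) = [[a,b],[c,d]];
  linear maps V^2 -> V are block rows (x,y).\<close>

type_synonym ('a,'n) endo = "'a^'n^'n"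
type_synonym ('a,'n) blk = "('a,'n) endo \<times> ('a,'n) endo \<times> ('a,'n) endo \<times> ('a,'n) endo"
type_synonym ('a,'n) col = "('a,'n) endo \<times> ('a,'n) endo"
type_synonym ('a,'n) row = "('a,'n) endo \<times> ('a,'n) endo"

definition bmult :: "('a::field,'n::finite) blk \<Rightarrow> ('a,'n) blk \<Rightarrow> ('a,'n) blk" where
  "bmult X Y = (case X of (a,b,c,d) \<Rightarrow> case Y of (e,f,g,h) \<Rightarrow>
     (a**e + b**g, a**f + b**h, c**e + d**g, c**f + d**h))"

definition Mblk :: "('a::field,'n::finite) endo \<Rightarrow> ('a,'n) blk" where
  "Mblk X = (0, mat 1, mat 1, X)"

fun prodM :: "(nat \<Rightarrow> ('a::field,'n::finite) endo) \<Rightarrow> nat \<Rightarrow> ('a,'n) blk" where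
  "prodM A 0 = (mat 1, 0, 0, mat 1)"
| "prodM A (Suc k) = bmult (prodM A k) (Mblk (A (Suc k)))"

fun contP :: "(nat \<Rightarrow> ('a::field,'n::finite) endo) \<Rightarrow> nat \<Rightarrow> ('a,'n) endo" where
  "contP A 0 = mat 1"
| "contP A (Suc 0) = A 1"
| "contP A (Suc (Suc k)) = contP A (Suc k) ** A (Suc (Suc k)) + contP A k"

definition diagram_phis :: "nat \<Rightarrow> (nat \<Rightarrow> ('a::field,'n::finite) endo) \<Rightarrow> (nat \<Rightarrow> ('a,'n) col) \<Rightarrow> bool" where
  "diagram_phis m A phi \<longleftrightarrow> (\<forall>k\<in>{1..m}.
     prodM A k = (fst (phi k), fst (phi (Suc k)), snd (phi k), snd (phi (Suc k))))"

definition psi :: "('a::field,'n::finite) row" where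
  "psi = (0, mat 1)"

definition row_blk :: "('a::field,'n::finite) row \<Rightarrow> ('a,'n) blk \<Rightarrow> ('a,'n) row" where
  "row_blk r v = (case r of (x,y) \<Rightarrow> case v of (a,b,c,d) \<Rightarrow> (x**a + y**c, x**b + y**d))"
definition endo_row :: "('a::field,'n::finite) endo \<Rightarrow> ('a,'n) row \<Rightarrow> ('a,'n) row" where
  "endo_row u r = (case r of (x,y) \<Rightarrow> (u**x, u**y))"
definition blk_col :: "('a::field,'n::finite) blk \<Rightarrow> ('a,'n) col \<Rightarrow> ('a,'n) col" where
  "blk_col v p = (case v of (a,b,c,d) \<Rightarrow> case p of (x,y) \<Rightarrow> (a**x + b**y, c**x + d**y))"
definition col_endo :: "('a::field,'n::finite) col \<Rightarrow> ('a,'n) endo \<Rightarrow> ('a,'n) col" where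
  "col_endo p u = (case p of (x,y) \<Rightarrow> (x**u, y**u))"

text \<open>Morphisms of diagram data (u0, v, u_1..u_{m+1}); u is normalised to 0 outside {1..m+1}.\<close>
definition sheaf_morphisms :: "nat \<Rightarrow> (nat \<Rightarrow> ('a::field,'n::finite) col) \<Rightarrow> (nat \<Rightarrow> ('a,'n) col)
   \<Rightarrow> (('a,'n) endo \<times> ('a,'n) blk \<times> (nat \<Rightarrow> ('a,'n) endo)) set" where
  "sheaf_morphisms m phi phi' = {(u0, v, u).
     endo_row u0 psi = row_blk psi v
     \<and> (\<forall>i\<in>{1..Suc m}. blk_col v (phi i) = col_endo (phi' i) (u i))
     \<and> (\<forall>i. i \<notin> {1..Suc m} \<longrightarrow> u i = 0)}"

definition pair_to_morphism :: "nat \<Rightarrow> ('a::field,'n::finite) endo \<times> ('a,'n) endo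
   \<Rightarrow> ('a,'n) endo \<times> ('a,'n) blk \<times> (nat \<Rightarrow> ('a,'n) endo)" where
  "pair_to_morphism m p = (case p of (u1,u2) \<Rightarrow>
     (u1, (u2, 0, 0, u1), \<lambda>k. if k \<in> {1..Suc m} then (if odd k then u1 else u2) else 0))"

end

theory Submission
  imports Defs
begin

text \<open>Write \<open>P k = M(A 1) \<cdots> M(A k)\<close>, whose block columns are \<open>phi k\<close> and \<open>phi (k+1)\<close>. The column
  conditions at \<open>k\<close> and \<open>k+1\<close> of a morphism say together that \<open>v P k = P' k diag(u k, u (k+1))\<close>.
  Since \<open>P (k+1) = P k M(A (k+1))\<close> and every \<open>P' k\<close> is left cancellable (each \<open>M(B)\<close> is
  invertible), passing from \<open>k\<close> to \<open>k+1\<close> amounts to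
  \<open>diag(u k, u (k+1)) M(A (k+1)) = M(A' (k+1)) diag(u (k+1), u (k+2))\<close>, that is
  \<open>u (k+2) = u k\<close> and \<open>u (k+1) A (k+1) = A' (k+1) u (k+2)\<close>. The condition on \<open>psi\<close> and the
  first block equation force \<open>v = diag(u 2, u 1)\<close> and \<open>u0 = u 1\<close>. So a morphism is determined
  by the pair \<open>(u 1, u 2)\<close>, and the remaining conditions are exactly the stated relations.\<close>

lemma matrix_add_rdistrib:
  fixes A B :: "'a::semiring_1^'n::finite^'m" and C :: "'a^'p^'n"
  shows "(A + B) ** C = A ** C + B ** C"
  by (vector matrix_matrix_mult_def sum.distrib[symmetric] distrib_right)

definition bdiag :: "('a::field,'n::finite) endo \<Rightarrow> ('a,'n) endo \<Rightarrow> ('a,'n) blk" where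
  "bdiag x y = (x, 0, 0, y)"

lemma bmult_assoc: "bmult (bmult X Y) Z = bmult X (bmult Y (Z::('a::field,'n::finite) blk))"
  by (cases X; cases Y; cases Z)
     (simp add: bmult_def matrix_add_ldistrib matrix_add_rdistrib matrix_mul_assoc add_ac)

lemma bmult_left_id: "bmult (mat 1, 0, 0, mat 1) X = (X::('a::field,'n::finite) blk)"
  by (cases X) (simp add: bmult_def)

lemma Mblk_left_cancel:
  assumes "bmult (Mblk B) X = bmult (Mblk B) (Y::('a::field,'n::finite) blk)"
  shows "X = Y"
  using assms by (cases X; cases Y) (simp add: bmult_def Mblk_def)

lemma prodM_left_cancel:
  assumes "bmult (prodM A k) X = bmult (prodM A k) (Y::('a::field,'n::finite) blk)"
  shows "X = Y"
  using assms
proof (induction k arbitrary: X Y)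
  case 0
  then show ?case by (simp add: bmult_left_id)
next
  case (Suc k)
  then have "bmult (Mblk (A (Suc k))) X = bmult (Mblk (A (Suc k))) Y"
    by (simp add: bmult_assoc)
  then show ?case by (rule Mblk_left_cancel)
qed

lemma prodM_one: "prodM A 1 = Mblk (A 1)"
  by (simp add: bmult_left_id)

lemma bmult_cols_eq_iff:
  "bmult v (fst p, fst q, snd p, snd q) = bmult (fst p', fst q', snd p', snd q') (bdiag x y)
   \<longleftrightarrow> blk_col v p = col_endo p' x \<and> blk_col v q = col_endo q' y"
  by (cases v; cases p; cases q; cases p'; cases q')
     (auto simp: bmult_def bdiag_def blk_col_def col_endo_def)

lemma psi_intertwines_iff: "endo_row u0 psi = row_blk psi (a, b, c, d) \<longleftrightarrow> c = 0 \<and> d = u0"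
  by (auto simp: endo_row_def row_blk_def psi_def)

lemma bdiag_Mblk_eq_iff:
  "bmult (bdiag x y) (Mblk B) = bmult (Mblk B') (bdiag y z) \<longleftrightarrow> z = x \<and> y ** B = B' ** z"
  by (auto simp: bmult_def bdiag_def Mblk_def)

lemma Mblk_intertwines_iff:
  "bmult (a, b, 0, u0) (Mblk B) = bmult (Mblk B') (bdiag x y)
   \<longleftrightarrow> b = 0 \<and> a = y \<and> x = u0 \<and> u0 ** B = B' ** y"
  by (auto simp: bmult_def bdiag_def Mblk_def)

lemma prodM_intertwines_Suc_iff:
  assumes "bmult v (prodM A k) = bmult (prodM A' k) (bdiag x y)"
  shows "bmult v (prodM A (Suc k)) = bmult (prodM A' (Suc k)) (bdiag y z)
         \<longleftrightarrow> z = x \<and> y ** A (Suc k) = A' (Suc k) ** z"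
proof -
  have "bmult v (prodM A (Suc k)) = bmult (prodM A' k) (bmult (bdiag x y) (Mblk (A (Suc k))))"
    using assms by (simp flip: bmult_assoc)
  moreover have "bmult (prodM A' (Suc k)) (bdiag y z)
      = bmult (prodM A' k) (bmult (Mblk (A' (Suc k))) (bdiag y z))"
    by (simp add: bmult_assoc)
  ultimately show ?thesis
    using prodM_left_cancel bdiag_Mblk_eq_iff by metis
qed

lemma prodM_intertwines_upto_iff:
  assumes "1 \<le> m"
  shows "(\<forall>k\<in>{1..m}. bmult v (prodM A k) = bmult (prodM A' k) (bdiag (u k) (u (Suc k))))
     \<longleftrightarrow> bmult v (prodM A 1) = bmult (prodM A' 1) (bdiag (u 1) (u 2))
         \<and> (\<forall>k\<in>{1..<m}. u (k + 2) = u k \<and> u (Suc k) ** A (Suc k) = A' (Suc k) ** u (k + 2))"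
  using assms
proof (induction m rule: nat_induct_at_least)
  case base
  then show ?case by (simp add: numeral_2_eq_2)
next
  case (Suc m)
  have split: "{1..Suc m} = insert (Suc m) {1..m}" "{1..<Suc m} = insert m {1..<m}"
    using Suc.hyps by auto
  show ?case
  proof (cases "bmult v (prodM A m) = bmult (prodM A' m) (bdiag (u m) (u (Suc m)))")
    case True
    then show ?thesis
      unfolding split using Suc.IH prodM_intertwines_Suc_iff[OF True, of "u (m + 2)"]
      by (auto simp del: prodM.simps)
  next
    case False
    then show ?thesis
      unfolding split using Suc.IH Suc.hyps by (auto simp del: prodM.simps)
  qed
qed

lemma column_conditions_iff_blocks:
  assumes "1 \<le> m" "diagram_phis m A phi" "diagram_phis m A' phi'"
  shows "(\<forall>i\<in>{1..Suc m}. blk_col v (phi i) = col_endo (phi' i) (u i))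
     \<longleftrightarrow> (\<forall>k\<in>{1..m}. bmult v (prodM A k) = bmult (prodM A' k) (bdiag (u k) (u (Suc k))))"
proof -
  have "(\<forall>k\<in>{1..m}. bmult v (prodM A k) = bmult (prodM A' k) (bdiag (u k) (u (Suc k))))
     \<longleftrightarrow> (\<forall>k\<in>{1..m}. blk_col v (phi k) = col_endo (phi' k) (u k)
                       \<and> blk_col v (phi (Suc k)) = col_endo (phi' (Suc k)) (u (Suc k)))"
    using assms(2,3) by (auto simp: diagram_phis_def bmult_cols_eq_iff simp del: prodM.simps)
  also have "\<dots> \<longleftrightarrow> (\<forall>i\<in>{1..Suc m}. blk_col v (phi i) = col_endo (phi' i) (u i))"
    using assms(1) by (auto simp: le_Suc_eq)
  finally show ?thesis ..
qed

lemma ball_atLeastAtMost_split_first: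
  assumes "1 \<le> m"
  shows "(\<forall>k\<in>{1..m}. P k) \<longleftrightarrow> P 1 \<and> (\<forall>k\<in>{1..<m}. P (Suc k))"
proof -
  have "{1..m} = insert 1 (Suc ` {1..<m})"
    using assms by (auto simp: image_iff intro!: bexI[of _ "_ - 1"])
  then show ?thesis
    by (simp del: image_Suc_atLeastLessThan)
qed

lemma sheaf_morphisms_iff:
  assumes "1 \<le> m" "diagram_phis m A phi" "diagram_phis m A' phi'"
  shows "(u0, v, u) \<in> sheaf_morphisms m phi phi'
     \<longleftrightarrow> v = bdiag (u 2) (u 1) \<and> u0 = u 1
         \<and> (\<forall>k\<in>{1..m}. u k ** A k = A' k ** u (Suc k))
         \<and> (\<forall>k\<in>{1..<m}. u (k + 2) = u k)
         \<and> (\<forall>i. i \<notin> {1..Suc m} \<longrightarrow> u i = 0)"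
    (is "_ \<longleftrightarrow> ?rhs")
proof -
  obtain a b c d where v: "v = (a, b, c, d)"
    by (cases v) auto
  show ?thesis
  proof (cases "c = 0 \<and> d = u0")
    case False
    then show ?thesis
      by (auto simp: sheaf_morphisms_def v psi_intertwines_iff bdiag_def)
  next
    case True
    with v have v: "v = (a, b, 0, u0)"
      by simp
    let ?vanishes = "\<forall>i. i \<notin> {1..Suc m} \<longrightarrow> u i = 0"
    have "(u0, v, u) \<in> sheaf_morphisms m phi phi'
       \<longleftrightarrow> (\<forall>k\<in>{1..m}. bmult v (prodM A k) = bmult (prodM A' k) (bdiag (u k) (u (Suc k))))
           \<and> ?vanishes"
      unfolding sheaf_morphisms_def column_conditions_iff_blocks[OF assms]
      by (simp add: v psi_intertwines_iff del: prodM.simps)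
    also have "\<dots> \<longleftrightarrow> bmult v (Mblk (A 1)) = bmult (Mblk (A' 1)) (bdiag (u 1) (u 2))
           \<and> (\<forall>k\<in>{1..<m}. u (k + 2) = u k \<and> u (Suc k) ** A (Suc k) = A' (Suc k) ** u (k + 2))
           \<and> ?vanishes"
      by (simp only: prodM_intertwines_upto_iff[OF assms(1)] prodM_one conj_assoc)
    also have "\<dots> \<longleftrightarrow> ?rhs"
      unfolding v Mblk_intertwines_iff ball_conj_distrib
        ball_atLeastAtMost_split_first[OF assms(1), of "\<lambda>k. u k ** A k = A' k ** u (Suc k)"]
      by (auto simp: bdiag_def numeral_2_eq_2)
    finally show ?thesis .
  qed
qed

definition alternate :: "'a \<Rightarrow> 'a \<Rightarrow> nat \<Rightarrow> 'a" where
  "alternate x y k = (if odd k then x else y)"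

lemma two_periodic_eq_alternate:
  assumes "\<forall>k\<in>{1..<m}. u (k + 2) = u k" "k \<in> {1..Suc m}"
  shows "u k = alternate (u 1) (u 2) k"
  using assms(2)
proof (induction k rule: less_induct)
  case (less k)
  show ?case
  proof (cases "k \<le> 2")
    case True
    with less.prems show ?thesis
      by (auto simp: alternate_def le_Suc_eq numeral_2_eq_2)
  next
    case False
    with less.prems have "k - 2 \<in> {1..<m}"
      by auto
    with assms(1) have "u (k - 2 + 2) = u (k - 2)"
      by blast
    moreover from False have "k - 2 + 2 = k"
      by simp
    ultimately have "u k = u (k - 2)"
      by simp
    with less.IH[of "k - 2"] False \<open>k - 2 \<in> {1..<m}\<close> show ?thesis
      by (simp add: alternate_def)
  qed
qed

lemma alternate_intertwines_iff:
  "(\<forall>k\<in>{1..m}. alternate x y k ** A k = A' k ** alternate x y (Suc k))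
   \<longleftrightarrow> (\<forall>k\<in>{1..m}. even k \<longrightarrow> A' k ** x = y ** A k) \<and> (\<forall>k\<in>{1..m}. odd k \<longrightarrow> A' k ** y = x ** A k)"
  by (auto simp: alternate_def)

lemma pair_to_morphism_eq:
  "pair_to_morphism m (x, y) = (x, bdiag y x, \<lambda>k. if k \<in> {1..Suc m} then alternate x y k else 0)"
  unfolding pair_to_morphism_def alternate_def bdiag_def by simp

lemma inj_pair_to_morphism: "inj (pair_to_morphism m)"
proof (rule injI)
  fix p q
  assume "pair_to_morphism m p = pair_to_morphism m q"
  then show "p = q"
    by (cases p; cases q) (simp add: pair_to_morphism_eq bdiag_def)
qed

lemma sheaf_morphisms_eq_pair_image:
  assumes "1 \<le> m" "diagram_phis m A phi" "diagram_phis m A' phi'"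
  shows "sheaf_morphisms m phi phi' = pair_to_morphism m `
           {(x, y). \<forall>k\<in>{1..m}. alternate x y k ** A k = A' k ** alternate x y (Suc k)}"
proof (intro equalityI subsetI)
  fix z
  assume "z \<in> sheaf_morphisms m phi phi'"
  moreover obtain u0 v u where z: "z = (u0, v, u)"
    by (cases z) auto
  ultimately have "(u0, v, u) \<in> sheaf_morphisms m phi phi'"
    by simp
  then have morphism: "v = bdiag (u 2) (u 1)" "u0 = u 1"
      "\<forall>k\<in>{1..m}. u k ** A k = A' k ** u (Suc k)" "\<forall>k\<in>{1..<m}. u (k + 2) = u k"
      "\<forall>i. i \<notin> {1..Suc m} \<longrightarrow> u i = 0"
    unfolding sheaf_morphisms_iff[OF assms] by blast+
  define x y where "x = u 1" and "y = u 2"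
  have alt: "u k = alternate x y k" if "k \<in> {1..Suc m}" for k
    unfolding x_def y_def using two_periodic_eq_alternate[OF morphism(4) that] .
  define w where "w = (\<lambda>k. if k \<in> {1..Suc m} then alternate x y k else 0)"
  have "u = w"
  proof
    fix k
    show "u k = w k"
      using alt[of k] morphism(5) by (auto simp: w_def)
  qed
  then have "z = (x, bdiag y x, w)"
    by (simp add: z morphism(1,2) x_def y_def)
  also have "\<dots> = pair_to_morphism m (x, y)"
    by (simp add: pair_to_morphism_eq w_def)
  finally have "z = pair_to_morphism m (x, y)" .
  moreover have "\<forall>k\<in>{1..m}. alternate x y k ** A k = A' k ** alternate x y (Suc k)"
    using morphism(3) alt by auto
  ultimately show "z \<in> pair_to_morphism m `
           {(x, y). \<forall>k\<in>{1..m}. alternate x y k ** A k = A' k ** alternate x y (Suc k)}"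
    by blast
next
  fix z
  assume "z \<in> pair_to_morphism m `
           {(x, y). \<forall>k\<in>{1..m}. alternate x y k ** A k = A' k ** alternate x y (Suc k)}"
  then obtain x y where z: "z = pair_to_morphism m (x, y)"
      and intertwines: "\<forall>k\<in>{1..m}. alternate x y k ** A k = A' k ** alternate x y (Suc k)"
    by auto
  let ?u = "\<lambda>k. if k \<in> {1..Suc m} then alternate x y k else 0"
  have "?u 1 = x" "?u 2 = y"
    using assms(1) by (auto simp: alternate_def)
  moreover have "\<forall>k\<in>{1..m}. ?u k ** A k = A' k ** ?u (Suc k)"
    using intertwines by auto
  moreover have "\<forall>k\<in>{1..<m}. ?u (k + 2) = ?u k"
    by (auto simp: alternate_def)
  ultimately show "z \<in> sheaf_morphisms m phi phi'"
    unfolding z pair_to_morphism_eq sheaf_morphisms_iff[OF assms] by auto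
qed

theorem mainTheorem8:
  fixes m :: nat
    and A A' :: "nat \<Rightarrow> 'a::field^'n::finite^'n"
    and phi phi' :: "nat \<Rightarrow> ('a^'n^'n) \<times> ('a^'n^'n)"
  assumes "m \<ge> 1"
    and "invertible (contP A m)" and "invertible (contP A' m)"
    and "diagram_phis m A phi" and "diagram_phis m A' phi'"
  shows "bij_betw (pair_to_morphism m)
           {(u1, u2). (\<forall>k\<in>{1..m}. even k \<longrightarrow> A' k ** u1 = u2 ** A k)
                    \<and> (\<forall>k\<in>{1..m}. odd k \<longrightarrow> A' k ** u2 = u1 ** A k)}
           (sheaf_morphisms m phi phi')"
proof -
  have "sheaf_morphisms m phi phi' = pair_to_morphism m `
           {(u1, u2). (\<forall>k\<in>{1..m}. even k \<longrightarrow> A' k ** u1 = u2 ** A k)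
                    \<and> (\<forall>k\<in>{1..m}. odd k \<longrightarrow> A' k ** u2 = u1 ** A k)}"
    unfolding sheaf_morphisms_eq_pair_image[OF assms(1,4,5)] alternate_intertwines_iff ..
  then show ?thesis
    unfolding bij_betw_def using inj_on_subset[OF inj_pair_to_morphism] by blast
qed

end
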